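(* For all integers $n\ge 86$ and all integers $k$ with $(n-1)^2/2\le k\le n^2/2$, $$b_k(n)-b_{k-1}(n)\;\ge\;C\,\frac{2^n}{n^{9/2}},\qquad\text{where } C=\frac{3\sqrt3}{2\sqrt2\,\pi^{3/2}}\approx 0.329.$$
   Context: $b_k(n)$ denotes the number of partitions of $k$ into distinct odd parts each at most $2n-1$; equivalently $\prod_{i=1}^n(1+q^{2i-1})=\sum_{k=0}^{n^2}b_k(n)q^k$. *)

theory Defs
  imports "HOL-Analysis.Analysis"
begin

definition b :: "int \<Rightarrow> nat \<Rightarrow> nat" where
  "b k n = card {S. S \<subseteq> {2*i+1 | i. i < n} \<and> int (\<Sum>S) = k}"

end

theory Submission
  imports Defs
begin

(* With q = exp (2 i x) the generating polynomial prod_{i<n} (1 + q^(2i+1)) equals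
   exp (i n^2 x) 2^n F_n(x), where F_n(x) = prod_{i<n} cos ((2i+1) x).  Hence the coefficient
   difference is a Fourier integral,
     pi (b_k(n) - b_{k-1}(n)) = 2^(n+1) * integral_0^(pi/2) (cos (M x) - cos ((M+2) x)) F_n(x) dx,
   with M = n^2 - 2k in [0, 2n-1].  On [0, pi/(4n)] the integrand is at least 2 sin^2 x F_n(x) >= 0,
   and on [0, 2 n^(-3/2)] Taylor bounds make it at least an explicit polynomial, whose integral
   is about 8 * 0.128 / n^(9/2).  Beyond pi/(4n) one uses |cos y| <= exp (-sin^2 y/2 - sin^4 y/4);
   linearising sin^2 and sin^4 turns log |F_n| into cosine sums over odd multiples, which telescope
   (2 sin a * sum_{i<n} cos ((2i+1) a) = sin (2na)).  This gives |F_n(x)| <= exp (-0.24 n), which is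
   negligible against n^(-9/2) once n >= 86. *)

section \<open>Coefficients as Fourier integrals\<close>

definition odd_cos_prod :: "nat \<Rightarrow> real \<Rightarrow> real" where
  "odd_cos_prod n x = (\<Prod>i<n. cos ((2 * real i + 1) * x))"

definition gap_kernel :: "nat \<Rightarrow> real \<Rightarrow> real \<Rightarrow> real" where
  "gap_kernel n M x = (cos (M * x) - cos ((M + 2) * x)) * odd_cos_prod n x"

lemma has_integral_exp_even_multiple:
  fixes m :: int
  shows "((\<lambda>x. exp (\<i> * (2 * of_int m * of_real x))) has_integral (if m = 0 then of_real pi else 0))
           {-(pi/2)..pi/2}"
proof (cases "m = 0")
  case True
  then show ?thesis
    using has_integral_const_real[of "1::complex" "-(pi/2)" "pi/2"] by (simp add: scaleR_conv_of_real)
next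
  case False
  define a where "a = \<i> * (2 * of_int m)"
  have a0: "a \<noteq> 0" using False by (simp add: a_def)
  have "((\<lambda>x. exp (a * of_real x) / a) has_vector_derivative exp (a * t)) (at t within {-(pi/2)..pi/2})" for t
    using a0 by (intro derivative_eq_intros has_complex_derivative_imp_has_vector_derivative [unfolded o_def] | simp)+
  then have "((\<lambda>t. exp (a * of_real t)) has_integral
              exp (a * of_real (pi/2)) / a - exp (a * of_real (-(pi/2))) / a) {-(pi/2)..pi/2}"
    by (intro fundamental_theorem_of_calculus) auto
  moreover have "exp (a * of_real (pi/2)) = exp (a * of_real (-(pi/2))) * exp (a * of_real pi)"
    by (simp add: exp_add[symmetric] algebra_simps)
  moreover have "exp (a * of_real pi) = 1"
    by (simp add: a_def exp_eq_1 algebra_simps)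
  ultimately show ?thesis using False by (simp add: a_def algebra_simps)
qed

lemma prod_one_plus_power_eq_sum_Pow:
  fixes z :: "'a::comm_semiring_1"
  assumes "finite A"
  shows "(\<Prod>y\<in>A. 1 + z ^ y) = (\<Sum>S\<in>Pow A. z ^ \<Sum>S)"
  using prod_add[OF assms, of "\<lambda>y. z ^ y" "\<lambda>_. 1"] by (simp add: add.commute power_sum)

lemma has_integral_count_subset_sums:
  fixes A :: "nat set" and k :: int
  assumes "finite A"
  shows "((\<lambda>x. exp (- \<i> * (2 * of_int k * of_real x)) * (\<Prod>y\<in>A. 1 + exp (2 * \<i> * of_real x) ^ y))
          has_integral of_real (pi * real (card {S\<in>Pow A. int (\<Sum>S) = k}))) {-(pi/2)..pi/2}"
proof -
  have shift: "exp (- \<i> * (2 * of_int k * of_real x)) * exp (2 * \<i> * of_real x) ^ m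
      = exp (\<i> * (2 * of_int (int m - k) * of_real x))" for x m
    by (simp add: exp_of_nat_mult[symmetric] exp_add[symmetric] algebra_simps)
  have "((\<lambda>x. \<Sum>S\<in>Pow A. exp (\<i> * (2 * of_int (int (\<Sum>S) - k) * of_real x))) has_integral
        (\<Sum>S\<in>Pow A. if int (\<Sum>S) - k = 0 then of_real pi else 0)) {-(pi/2)..pi/2}"
    using assms by (intro has_integral_sum has_integral_exp_even_multiple) auto
  moreover have "(\<Sum>S\<in>Pow A. if int (\<Sum>S) - k = 0 then (of_real pi :: complex) else 0)
      = of_real (pi * real (card {S\<in>Pow A. int (\<Sum>S) = k}))"
    using assms by (simp add: sum.inter_filter[symmetric])
  moreover have "exp (- \<i> * (2 * of_int k * of_real x)) * (\<Prod>y\<in>A. 1 + exp (2 * \<i> * of_real x) ^ y)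
      = (\<Sum>S\<in>Pow A. exp (\<i> * (2 * of_int (int (\<Sum>S) - k) * of_real x)))" for x
    by (simp only: prod_one_plus_power_eq_sum_Pow[OF assms] sum_distrib_left shift)
  ultimately show ?thesis by simp
qed

lemma sum_odd: "(\<Sum>i<n. 2 * of_nat i + 1) = (of_nat n ^ 2 :: 'a::comm_semiring_1)"
  by (induction n) (auto simp: power2_eq_square algebra_simps mult_2_right)

lemma prod_one_plus_exp_odd:
  "(\<Prod>y\<in>{2*i+1 | i. i < n}. 1 + exp (2 * \<i> * of_real x) ^ y)
     = exp (\<i> * of_real (real n ^ 2 * x)) * of_real (2 ^ n * odd_cos_prod n x)"
proof -
  have odd_image: "{2*i+1 | i. i < n} = (\<lambda>i. 2*i+1) ` {..<n}" by auto
  have inj: "inj_on (\<lambda>i::nat. 2*i+1) {..<n}" by (auto simp: inj_on_def)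
  have factor: "1 + exp (2 * \<i> * of_real x) ^ (2*i+1) =
      exp (\<i> * of_real ((2 * real i + 1) * x)) * of_real (2 * cos ((2 * real i + 1) * x))" for i
  proof -
    have "complex_of_real (cos ((2 * real i + 1) * x))
        = (exp (\<i> * of_real ((2 * real i + 1) * x)) + exp (- (\<i> * of_real ((2 * real i + 1) * x)))) / 2"
      by (simp add: cos_of_real[symmetric] cos_exp_eq)
    then show ?thesis
      by (simp add: exp_of_nat_mult[symmetric] exp_add[symmetric] exp_minus field_simps)
  qed
  have "(\<Prod>y\<in>{2*i+1 | i. i < n}. 1 + exp (2 * \<i> * of_real x) ^ y)
      = (\<Prod>i<n. exp (\<i> * of_real ((2 * real i + 1) * x))) * (\<Prod>i<n. of_real (2 * cos ((2 * real i + 1) * x)))"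
    unfolding odd_image prod.reindex[OF inj] comp_def factor by (rule prod.distrib)
  also have "(\<Prod>i<n. exp (\<i> * of_real ((2 * real i + 1) * x))) = exp (\<i> * of_real (real n ^ 2 * x))"
    by (simp add: exp_sum[symmetric] sum_distrib_left[symmetric] sum_distrib_right[symmetric] sum_odd)
  also have "(\<Prod>i<n. complex_of_real (2 * cos ((2 * real i + 1) * x))) = of_real (2 ^ n * odd_cos_prod n x)"
    by (simp add: odd_cos_prod_def prod.distrib)
  finally show ?thesis .
qed

lemma b_eq_card_Pow: "b k n = card {S\<in>Pow {2*i+1 | i. i < n}. int (\<Sum>S) = k}"
  unfolding b_def by (rule arg_cong[where f=card]) auto

lemma has_integral_b_diff:
  "((\<lambda>x. 2 ^ n * gap_kernel n (real n ^ 2 - 2 * of_int k) x)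
      has_integral pi * (real (b k n) - real (b (k - 1) n))) {-(pi/2)..pi/2}"
proof -
  define A where "A = {2*i+1 | i. i < n}"
  have "A = (\<lambda>i. 2*i+1) ` {..<n}" unfolding A_def by auto
  then have fin: "finite A" by simp
  define G where
    "G j x = Re (exp (- \<i> * (2 * of_int j * of_real x)) * (\<Prod>y\<in>A. 1 + exp (2 * \<i> * of_real x) ^ y))"
    for j :: int and x
  have G: "G j x = 2 ^ n * (cos ((real n ^ 2 - 2 * of_int j) * x) * odd_cos_prod n x)" for j x
  proof -
    have "exp (- \<i> * (2 * of_int j * of_real x)) * exp (\<i> * of_real (real n ^ 2 * x))
        = exp (\<i> * of_real ((real n ^ 2 - 2 * of_int j) * x))"
      by (simp add: exp_add[symmetric] algebra_simps)
    then show ?thesis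
      unfolding G_def A_def prod_one_plus_exp_odd mult.assoc[symmetric] by (simp add: Re_exp)
  qed
  have "((\<lambda>x. G k x - G (k - 1) x) has_integral pi * real (b k n) - pi * real (b (k - 1) n)) {-(pi/2)..pi/2}"
    using has_integral_diff[OF has_integral_Re[OF has_integral_count_subset_sums[OF fin, of k]]
                               has_integral_Re[OF has_integral_count_subset_sums[OF fin, of "k - 1"]]]
    by (simp add: G_def b_eq_card_Pow A_def)
  moreover have "G k x - G (k - 1) x = 2 ^ n * gap_kernel n (real n ^ 2 - 2 * of_int k) x" for x
    unfolding G gap_kernel_def by (simp add: algebra_simps)
  ultimately show ?thesis by (simp add: algebra_simps)
qed

lemma continuous_on_gap_kernel: "continuous_on A (gap_kernel n M)"
  unfolding gap_kernel_def[abs_def] odd_cos_prod_def by (intro continuous_intros)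

lemma integral_even_function:
  fixes f :: "real \<Rightarrow> real"
  assumes "0 \<le> a" and even: "\<And>x. f (- x) = f x" and "continuous_on {-a..a} f"
  shows "integral {-a..a} f = 2 * integral {0..a} f"
proof -
  have "f integrable_on {-a..a}"
    by (rule integrable_continuous_interval) fact
  then have "integral {-a..a} f = integral {-a..0} f + integral {0..a} f"
    using assms(1) by (intro Henstock_Kurzweil_Integration.integral_combine[symmetric]) auto
  moreover have "integral {-a..-0} (\<lambda>x. f (- x)) = integral {0..a} f"
    by (rule Henstock_Kurzweil_Integration.integral_reflect_real)
  ultimately show ?thesis by (simp add: even)
qed

lemma b_diff_eq_integral:
  "pi * (real (b k n) - real (b (k - 1) n))
     = 2 ^ Suc n * integral {0..pi/2} (gap_kernel n (real n ^ 2 - 2 * of_int k))"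
proof -
  define M where "M = real n ^ 2 - 2 * of_int k"
  have "pi * (real (b k n) - real (b (k - 1) n)) = integral {-(pi/2)..pi/2} (\<lambda>x. 2 ^ n * gap_kernel n M x)"
    using has_integral_b_diff[of n k] unfolding M_def by (rule integral_unique[symmetric])
  also have "\<dots> = 2 ^ n * integral {-(pi/2)..pi/2} (gap_kernel n M)"
    by simp
  also have "integral {-(pi/2)..pi/2} (gap_kernel n M) = 2 * integral {0..pi/2} (gap_kernel n M)"
    by (rule integral_even_function[OF _ _ continuous_on_gap_kernel]) (simp_all add: gap_kernel_def odd_cos_prod_def)
  finally show ?thesis by (simp add: M_def)
qed

section \<open>Elementary trigonometric estimates\<close>

lemma cos_ge_one_minus_half_square: "1 - x\<^sup>2 / 2 \<le> cos (x::real)"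
proof -
  have "cos x = 1 - 2 * (sin (x/2))\<^sup>2"
    using cos_double[of "x/2"] sin_squared_eq[of "x/2"] by simp
  moreover have "(sin (x/2))\<^sup>2 \<le> (x/2)\<^sup>2"
    by (rule abs_le_square_iff[THEN iffD1]) (rule abs_sin_x_le_abs_x)
  ultimately show ?thesis by (simp add: power_divide)
qed

lemma sin_ge_minus_cube:
  fixes x :: real assumes "0 \<le> x"
  shows "x - x ^ 3 / 6 \<le> sin x"
proof -
  let ?g = "\<lambda>t. sin t - t + t ^ 3 / 6"
  have "?g 0 \<le> ?g x"
  proof (rule DERIV_nonneg_imp_nondecreasing[OF assms])
    fix t :: real
    have "(?g has_real_derivative (cos t - 1 + t\<^sup>2 / 2)) (at t)"
      by (auto intro!: derivative_eq_intros simp: power2_eq_square)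
    moreover have "cos t - 1 + t\<^sup>2 / 2 \<ge> 0" using cos_ge_one_minus_half_square[of t] by simp
    ultimately show "\<exists>y. (?g has_real_derivative y) (at t) \<and> 0 \<le> y" by blast
  qed
  then show ?thesis by simp
qed

lemma sin_ge_mult_one_minus:
  fixes z c :: real assumes "0 \<le> z" "z \<le> c"
  shows "z * (1 - c ^ 2 / 6) \<le> sin z"
proof -
  have "z * z \<le> c * c" using assms by (intro mult_mono) auto
  then have "z * (z * z) \<le> z * (c * c)" using assms by (intro mult_left_mono) auto
  then have "z ^ 3 \<le> z * c ^ 2" by (simp add: power3_eq_cube power2_eq_square mult.assoc)
  then show ?thesis using sin_ge_minus_cube[OF assms(1)] by (simp add: algebra_simps)
qed

lemma sin_le_sin_of_mem_symmetric:
  fixes a z :: real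
  assumes "0 \<le> a" "a \<le> pi/2" "a \<le> z" "z \<le> pi - a"
  shows "sin a \<le> sin z"
proof (cases "z \<le> pi/2")
  case True then show ?thesis using assms by (intro sin_monotone_2pi_le) auto
next
  case False
  then have "sin a \<le> sin (pi - z)" using assms by (intro sin_monotone_2pi_le) auto
  then show ?thesis by simp
qed

lemma sin_le_quarter_shift:
  fixes z :: real assumes "0 \<le> z"
  shows "sin z \<le> (z + pi) / 4"
proof (cases "z \<le> pi / 3")
  case True
  then show ?thesis using sin_x_le_x[OF assms] by simp
next
  case False
  then have "1 \<le> (z + pi) / 4" using pi_gt3 by simp
  then show ?thesis using sin_le_one[of z] by linarith
qed

lemma one_minus_le_exp_neg_quadratic:
  fixes y :: real assumes "0 \<le> y"
  shows "1 - y \<le> exp (- (y + y\<^sup>2 / 2))"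
proof -
  let ?f = "\<lambda>t. exp (- (t + t\<^sup>2 / 2)) - (1 - t)"
  have "?f 0 \<le> ?f y"
  proof (rule DERIV_nonneg_imp_nondecreasing[OF assms])
    fix t :: real assume "0 \<le> t"
    have "(?f has_real_derivative 1 - exp (- (t + t\<^sup>2 / 2)) * (1 + t)) (at t)"
      by (auto intro!: derivative_eq_intros simp: power2_eq_square algebra_simps)
    moreover have "1 + t \<le> exp (t + t\<^sup>2 / 2)"
      using exp_ge_add_one_self[of "t + t\<^sup>2 / 2"] zero_le_power2[of t] by linarith
    then have "exp (- (t + t\<^sup>2 / 2)) * (1 + t) \<le> 1" by (simp add: exp_minus field_simps)
    ultimately show "\<exists>z. (?f has_real_derivative z) (at t) \<and> 0 \<le> z" by auto
  qed
  then show ?thesis by simp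
qed

lemma abs_cos_le_exp_sin: "\<bar>cos (x::real)\<bar> \<le> exp (- ((sin x)\<^sup>2 / 2 + (sin x) ^ 4 / 4))"
proof -
  define y where "y = (sin x)\<^sup>2"
  have "\<bar>cos x\<bar>\<^sup>2 = 1 - y" by (simp add: y_def cos_squared_eq)
  also have "\<dots> \<le> exp (- (y + y\<^sup>2 / 2))" by (rule one_minus_le_exp_neg_quadratic) (simp add: y_def)
  also have "\<dots> = (exp (- (y / 2 + y\<^sup>2 / 4)))\<^sup>2"
    by (simp add: exp_double[symmetric] algebra_simps power2_eq_square) (simp add: exp_add[symmetric])
  finally have "\<bar>cos x\<bar> \<le> exp (- (y / 2 + y\<^sup>2 / 4))"
    by (rule power2_le_imp_le) simp
  then show ?thesis by (simp add: y_def power2_eq_square power4_eq_xxxx mult.assoc)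
qed

lemma sin_power_two_four_eq:
  "(sin (y::real))\<^sup>2 / 2 + (sin y) ^ 4 / 4 = 11/32 - 3/8 * cos (2 * y) + cos (4 * y) / 32"
proof -
  have c4: "cos (4 * y) = 1 - 2 * (sin (2 * y))\<^sup>2" using cos_double_sin[of "2 * y"] by simp
  show ?thesis
    unfolding c4 cos_double_sin sin_double power_mult_distrib cos_squared_eq
    by (simp add: power2_eq_square power4_eq_xxxx field_simps)
qed

lemma sin_times_sum_cos_odd:
  "2 * sin a * (\<Sum>i<n. cos ((2 * real i + 1) * a)) = sin (2 * real n * a)"
proof (induction n)
  case (Suc n)
  have "2 * sin a * cos ((2 * real n + 1) * a) = sin ((2 * real n + 2) * a) - sin (2 * real n * a)"
    using sin_times_cos[of a "(2 * real n + 1) * a"] by (simp add: algebra_simps)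
  then show ?case using Suc by (simp add: algebra_simps)
qed simp

lemma sum_cos_odd_le:
  assumes "0 < s" "s \<le> sin a" "sin (2 * real n * a) \<le> u" "0 \<le> u"
  shows "(\<Sum>i<n. cos ((2 * real i + 1) * a)) \<le> u / (2 * s)"
proof (cases "(\<Sum>i<n. cos ((2 * real i + 1) * a)) \<le> 0")
  case True
  moreover have "0 \<le> u / (2 * s)" using assms by simp
  ultimately show ?thesis by linarith
next
  case False
  then have "(\<Sum>i<n. cos ((2 * real i + 1) * a)) * (2 * s) \<le> 2 * sin a * (\<Sum>i<n. cos ((2 * real i + 1) * a))"
    using assms by (simp add: mult_left_mono mult.commute)
  then show ?thesis
    using assms by (simp add: sin_times_sum_cos_odd pos_le_divide_eq)
qed

lemma sum_cos_odd_ge: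
  assumes "0 < s" "s \<le> sin a" "- u \<le> sin (2 * real n * a)" "0 \<le> u"
  shows "- (u / (2 * s)) \<le> (\<Sum>i<n. cos ((2 * real i + 1) * a))"
proof (cases "0 \<le> (\<Sum>i<n. cos ((2 * real i + 1) * a))")
  case True
  moreover have "0 \<le> u / (2 * s)" using assms by simp
  ultimately show ?thesis by linarith
next
  case False
  then have "2 * sin a * (\<Sum>i<n. cos ((2 * real i + 1) * a)) \<le> (\<Sum>i<n. cos ((2 * real i + 1) * a)) * (2 * s)"
    using assms by (simp add: mult_left_mono_neg mult.commute)
  then have "- u \<le> (\<Sum>i<n. cos ((2 * real i + 1) * a)) * (2 * s)"
    using assms by (simp add: sin_times_sum_cos_odd)
  then have "- u / (2 * s) \<le> (\<Sum>i<n. cos ((2 * real i + 1) * a))"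
    using assms by (subst pos_divide_le_eq) auto
  then show ?thesis by simp
qed

lemma sum_cos_odd_ge_neg: "- real n \<le> (\<Sum>i<n. cos ((2 * real i + 1) * a))"
  using sum_mono[of "{..<n}" "\<lambda>_. -1" "\<lambda>i. cos ((2 * real i + 1) * a)"] by simp

lemma sum_cos_odd_reflect:
  "(\<Sum>i<n. cos ((2 * real i + 1) * (real m * pi - y))) = (- 1) ^ m * (\<Sum>i<n. cos ((2 * real i + 1) * y))"
proof -
  have "cos ((2 * real i + 1) * (real m * pi - y)) = (- 1) ^ m * cos ((2 * real i + 1) * y)" for i
  proof -
    have "cos ((2 * real i + 1) * (real m * pi - y)) = cos (real ((2 * i + 1) * m) * pi - (2 * real i + 1) * y)"
      by (simp add: algebra_simps)
    also have "\<dots> = (- 1) ^ ((2 * i + 1) * m) * cos ((2 * real i + 1) * y)"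
      using cos_diff[of "real ((2 * i + 1) * m) * pi" "(2 * real i + 1) * y"] by (simp only: cos_npi sin_npi)
    also have "(- 1 :: real) ^ ((2 * i + 1) * m) = (- 1) ^ m"
      unfolding power_mult by simp
    finally show ?thesis .
  qed
  then show ?thesis by (simp add: sum_distrib_left)
qed

section \<open>Decay of the cosine product away from the origin\<close>

lemma pi_bounds: "3.14159 \<le> pi" "pi \<le> 3.1416"
  using pi_approx by simp_all

lemma abs_odd_cos_prod_le_exp_sums:
  "\<bar>odd_cos_prod n x\<bar> \<le> exp (- (11 * real n / 32 - 3/8 * (\<Sum>i<n. cos ((2 * real i + 1) * (2 * x)))
                                 + (\<Sum>i<n. cos ((2 * real i + 1) * (4 * x))) / 32))"
proof -
  have "\<bar>odd_cos_prod n x\<bar> = (\<Prod>i<n. \<bar>cos ((2 * real i + 1) * x)\<bar>)"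
    by (simp add: odd_cos_prod_def abs_prod)
  also have "\<dots> \<le> (\<Prod>i<n. exp (- ((sin ((2 * real i + 1) * x))\<^sup>2 / 2 + (sin ((2 * real i + 1) * x)) ^ 4 / 4)))"
    by (intro prod_mono conjI abs_cos_le_exp_sin) simp
  also have "\<dots> = exp (\<Sum>i<n. - (11/32 - 3/8 * cos ((2 * real i + 1) * (2 * x)) + cos ((2 * real i + 1) * (4 * x)) / 32))"
    by (simp add: exp_sum sin_power_two_four_eq algebra_simps)
  also have "\<dots> = exp (- (11 * real n / 32 - 3/8 * (\<Sum>i<n. cos ((2 * real i + 1) * (2 * x)))
                                 + (\<Sum>i<n. cos ((2 * real i + 1) * (4 * x))) / 32))"
    by (simp add: sum.distrib sum_subtractf sum_distrib_left sum_divide_distrib)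
  finally show ?thesis .
qed

lemma sum_cos_odd_double_le_away:
  fixes x :: real
  assumes n: "86 \<le> n" and x: "7 / (4 * real n) \<le> x" "x \<le> pi/2 - 7 / (4 * real n)"
  shows "(\<Sum>i<n. cos ((2 * real i + 1) * (2 * x))) \<le> real n / 6.98"
proof -
  have nr: "86 \<le> real n" using n by simp
  define a where "a = 7 / (2 * real n)"
  have a0: "0 \<le> a" and a1: "a \<le> 7/172" using nr by (auto simp: a_def field_simps)
  have "sin a \<le> sin (2 * x)"
    using x a1 pi_gt3 by (intro sin_le_sin_of_mem_symmetric) (auto simp: a_def field_simps)
  moreover have "a * (1 - (7/172)^2 / 6) \<le> sin a" by (rule sin_ge_mult_one_minus[OF a0 a1])
  moreover have "3.49 / real n \<le> a * (1 - (7/172)^2 / 6)" using nr by (simp add: a_def field_simps)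
  ultimately have "3.49 / real n \<le> sin (2 * x)" by linarith
  then have "(\<Sum>i<n. cos ((2 * real i + 1) * (2 * x))) \<le> 1 / (2 * (3.49 / real n))"
    using nr by (intro sum_cos_odd_le) auto
  then show ?thesis using nr by (simp add: field_simps)
qed

lemma sum_cos_odd_double_le_near:
  fixes x :: real
  assumes n: "86 \<le> n" and x: "pi / (4 * real n) \<le> x" "x \<le> 7 / (4 * real n)"
  shows "(\<Sum>i<n. cos ((2 * real i + 1) * (2 * x))) \<le> real n / 6.98"
proof -
  have nr: "86 \<le> real n" using n by simp
  have "0 < pi / (4 * real n)" using nr by simp
  then have x0: "0 < x" using x by linarith
  have "x * (4 * real n) \<le> 7" using x nr by (simp add: field_simps)
  moreover have "x * 344 \<le> x * (4 * real n)" using x0 nr by (intro mult_left_mono) auto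
  ultimately have x1: "2 * x \<le> 7/172" by linarith
  have big: "pi \<le> 2 * real n * (2 * x)" using x nr by (simp add: field_simps)
  show ?thesis
  proof (cases "2 * real n * (2 * x) < 2 * pi")
    case True
    have "0 < sin (2 * x)" using x0 x1 pi_gt3 by (intro sin_gt_zero) auto
    moreover have "sin (2 * real n * (2 * x)) \<le> 0" using big True by (intro sin_le_zero)
    ultimately have "(\<Sum>i<n. cos ((2 * real i + 1) * (2 * x))) \<le> 0 / (2 * sin (2 * x))"
      by (intro sum_cos_odd_le) auto
    then show ?thesis by simp
  next
    case False
    have "sin (2 * real n * (2 * x)) = sin (2 * real n * (2 * x) - 2 * pi)" by (simp add: sin_diff)
    also have "\<dots> \<le> 2 * real n * (2 * x) - 2 * pi" using False by (intro sin_x_le_x) simp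
    also have "\<dots> \<le> 7 - 2 * pi" using x nr by (simp add: field_simps)
    also have "\<dots> \<le> 0.7169" using pi_bounds by simp
    finally have S: "sin (2 * real n * (2 * x)) \<le> 0.7169" .
    have "pi / real n \<le> 2 * x" using False nr by (simp add: field_simps)
    then have "pi / real n * (1 - (7/172)^2 / 6) \<le> 2 * x * (1 - (7/172)^2 / 6)"
      by (intro mult_right_mono) (simp_all add: power2_eq_square)
    moreover have "2 * x * (1 - (7/172)^2 / 6) \<le> sin (2 * x)"
      using x0 x1 by (intro sin_ge_mult_one_minus) auto
    moreover have "3.13 / real n \<le> pi / real n * (1 - (7/172)^2 / 6)"
      using pi_bounds nr by (simp add: field_simps)
    ultimately have "3.13 / real n \<le> sin (2 * x)" by linarith
    then have "(\<Sum>i<n. cos ((2 * real i + 1) * (2 * x))) \<le> 0.7169 / (2 * (3.13 / real n))"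
      using S nr by (intro sum_cos_odd_le) auto
    then show ?thesis using nr by (simp add: field_simps)
  qed
qed

lemma abs_odd_cos_prod_le_mid:
  fixes x :: real
  assumes "86 \<le> n" "pi / (4 * real n) \<le> x" "x \<le> pi/2 - 7 / (4 * real n)"
  shows "\<bar>odd_cos_prod n x\<bar> \<le> exp (- (0.2587 * real n))"
proof -
  have "(\<Sum>i<n. cos ((2 * real i + 1) * (2 * x))) \<le> real n / 6.98"
    using assms sum_cos_odd_double_le_near sum_cos_odd_double_le_away by (cases "x \<le> 7 / (4 * real n)") auto
  then have "- (11 * real n / 32 - 3/8 * (\<Sum>i<n. cos ((2 * real i + 1) * (2 * x)))
                + (\<Sum>i<n. cos ((2 * real i + 1) * (4 * x))) / 32) \<le> - (0.2587 * real n)"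
    using sum_cos_odd_ge_neg[of n "4 * x"] by simp
  then show ?thesis
    using abs_odd_cos_prod_le_exp_sums[of n x] by (meson exp_le_cancel_iff order.trans)
qed

lemma sum_cos_odd_double_nonneg_end:
  fixes p :: real
  assumes n: "2 \<le> n" and p: "0 < p" "p \<le> 7 / (4 * real n)"
    and not_mid: "\<not> (pi \<le> 4 * real n * p \<and> 4 * real n * p \<le> 2 * pi)"
  shows "0 \<le> (\<Sum>i<n. cos ((2 * real i + 1) * (2 * p)))"
proof -
  have np: "4 * real n * p \<le> 7" using p n by (simp add: field_simps)
  have "8 * p \<le> 4 * real n * p" using p n by (intro mult_right_mono) auto
  then have "2 * p < pi" using np pi_gt3 by linarith
  then have "0 < sin (2 * p)" using p by (intro sin_gt_zero) auto
  moreover have "0 \<le> sin (2 * real n * (2 * p))"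
  proof (cases "4 * real n * p \<le> pi")
    case True then show ?thesis using p by (intro sin_ge_zero) auto
  next
    case False
    then have "0 \<le> sin (4 * real n * p - 2 * pi)"
      using not_mid np pi_bounds by (intro sin_ge_zero) auto
    then show ?thesis by (simp add: sin_diff algebra_simps)
  qed
  ultimately have "- (0 / (2 * sin (2 * p))) \<le> (\<Sum>i<n. cos ((2 * real i + 1) * (2 * p)))"
    by (intro sum_cos_odd_ge) auto
  then show ?thesis by simp
qed

lemma sum_cos_odd_double_ge_end:
  fixes p :: real
  assumes n: "86 \<le> n" and p: "0 < p" "p \<le> 7 / (4 * real n)" "pi \<le> 4 * real n * p"
  shows "- (real n / (4 * (1 - (7/172)^2 / 6))) \<le> (\<Sum>i<n. cos ((2 * real i + 1) * (2 * p)))"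
proof -
  have nr: "86 \<le> real n" using n by simp
  have "- sin (2 * real n * (2 * p)) = sin (4 * real n * p - pi)" by (simp add: algebra_simps)
  also have "\<dots> \<le> real n * p" using sin_le_quarter_shift[of "4 * real n * p - pi"] p by simp
  finally have S: "- (real n * p) \<le> sin (2 * real n * (2 * p))" by linarith
  have "p * 344 \<le> p * (4 * real n)" using p nr by (intro mult_left_mono) auto
  moreover have "p * (4 * real n) \<le> 7" using p nr by (simp add: field_simps)
  ultimately have "2 * p \<le> 7/172" by linarith
  then have "2 * p * (1 - (7/172)^2 / 6) \<le> sin (2 * p)"
    using p by (intro sin_ge_mult_one_minus) auto
  then have "- (real n * p / (2 * (2 * p * (1 - (7/172)^2 / 6)))) \<le> (\<Sum>i<n. cos ((2 * real i + 1) * (2 * p)))"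
    using S p by (intro sum_cos_odd_ge) (auto simp: power2_eq_square)
  also have "real n * p / (2 * (2 * p * (1 - (7/172)^2 / 6))) = real n / (4 * (1 - (7/172)^2 / 6))"
    using p by (simp add: field_simps)
  finally show ?thesis .
qed

lemma sum_cos_odd_quadruple_ge_end:
  fixes p :: real
  assumes n: "86 \<le> n" and p: "p \<le> 7 / (4 * real n)" "pi \<le> 4 * real n * p"
  shows "- (real n / 6.276) \<le> (\<Sum>i<n. cos ((2 * real i + 1) * (4 * p)))"
proof -
  have nr: "86 \<le> real n" using n by simp
  have "0 < 4 * real n * p" using p pi_gt_zero by linarith
  then have p0: "0 \<le> p" using nr by (simp add: zero_less_mult_iff)
  have "p * 344 \<le> p * (4 * real n)" using p0 nr by (intro mult_left_mono) auto
  moreover have "p * (4 * real n) \<le> 7" using p nr by (simp add: field_simps)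
  ultimately have "4 * p \<le> 7/86" by linarith
  then have "4 * p * (1 - (7/86)^2 / 6) \<le> sin (4 * p)"
    using p0 by (intro sin_ge_mult_one_minus) auto
  moreover have "pi / real n \<le> 4 * p" using p nr by (simp add: field_simps)
  then have "pi / real n * (1 - (7/86)^2 / 6) \<le> 4 * p * (1 - (7/86)^2 / 6)"
    by (intro mult_right_mono) (simp_all add: power2_eq_square)
  moreover have "3.138 / real n \<le> pi / real n * (1 - (7/86)^2 / 6)"
    using pi_bounds nr by (simp add: field_simps)
  ultimately have "3.138 / real n \<le> sin (4 * p)" by linarith
  then have "- (1 / (2 * (3.138 / real n))) \<le> (\<Sum>i<n. cos ((2 * real i + 1) * (4 * p)))"
    using nr by (intro sum_cos_odd_ge) auto
  then show ?thesis using nr by (simp add: field_simps)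
qed

lemma abs_odd_cos_prod_le_end:
  fixes x :: real
  assumes n: "86 \<le> n" and x: "pi/2 - 7 / (4 * real n) \<le> x" "x \<le> pi/2"
  shows "\<bar>odd_cos_prod n x\<bar> \<le> exp (- (0.2449 * real n))"
proof (cases "x = pi/2")
  case True
  then have "odd_cos_prod n x = 0"
    unfolding odd_cos_prod_def True using n by (intro prod_zero bexI[of _ 0]) auto
  then show ?thesis by simp
next
  case False
  define p where "p = pi/2 - x"
  have nr: "86 \<le> real n" using n by simp
  have p: "0 < p" "p \<le> 7 / (4 * real n)" using x False by (auto simp: p_def)
  define S1 where "S1 = (\<Sum>i<n. cos ((2 * real i + 1) * (2 * p)))"
  define S2 where "S2 = (\<Sum>i<n. cos ((2 * real i + 1) * (4 * p)))"
  have "(\<Sum>i<n. cos ((2 * real i + 1) * (2 * x))) = - S1"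
    using sum_cos_odd_reflect[of 1 "2 * p" n] by (simp add: S1_def p_def algebra_simps)
  moreover have "(\<Sum>i<n. cos ((2 * real i + 1) * (4 * x))) = S2"
    using sum_cos_odd_reflect[of 2 "4 * p" n] by (simp add: S2_def p_def algebra_simps)
  moreover have "0.2449 * real n \<le> 11 * real n / 32 + 3/8 * S1 + S2 / 32"
  proof (cases "pi \<le> 4 * real n * p \<and> 4 * real n * p \<le> 2 * pi")
    case True
    then show ?thesis
      using sum_cos_odd_double_ge_end[OF n p] sum_cos_odd_quadruple_ge_end[OF n p(2)] nr
      unfolding S1_def S2_def by (simp add: field_simps)
  next
    case False
    then show ?thesis
      using sum_cos_odd_double_nonneg_end[OF _ p False] sum_cos_odd_ge_neg[of n "4 * p"] n
      unfolding S1_def S2_def by simp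
  qed
  ultimately have "- (11 * real n / 32 - 3/8 * (\<Sum>i<n. cos ((2 * real i + 1) * (2 * x)))
                     + (\<Sum>i<n. cos ((2 * real i + 1) * (4 * x))) / 32) \<le> - (0.2449 * real n)"
    by linarith
  then show ?thesis
    using abs_odd_cos_prod_le_exp_sums[of n x] by (meson exp_le_cancel_iff order.trans)
qed

section \<open>The main term near the origin\<close>

lemma sum_odd_squares: "(\<Sum>i<n. (2 * real i + 1) ^ 2) = real n * (4 * real n ^ 2 - 1) / 3"
  by (induction n) (auto simp: power2_eq_square field_simps)

lemma sum_odd_fourth_powers:
  "(\<Sum>i<n. (2 * real i + 1) ^ 4) = real n * (4 * real n ^ 2 - 1) * (12 * real n ^ 2 - 7) / 15"
  by (induction n) (auto simp: power2_eq_square power4_eq_xxxx field_simps)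

lemma sum_odd_fourth_powers_le: "(\<Sum>i<n. (2 * real i + 1) ^ 4) \<le> 16/5 * real n ^ 5"
proof -
  have "real n * (7 - 40 * real n ^ 2) \<le> 0"
  proof (cases "n = 0")
    case False
    then have "1 \<le> real n ^ 2" by (simp add: one_le_power)
    then show ?thesis by (intro mult_nonneg_nonpos) auto
  qed simp
  moreover have "real n * (4 * real n ^ 2 - 1) * (12 * real n ^ 2 - 7)
      = 48 * real n ^ 5 + real n * (7 - 40 * real n ^ 2)"
    by algebra
  ultimately show ?thesis unfolding sum_odd_fourth_powers by linarith
qed

lemma cos_ge_exp_neg:
  fixes y :: real assumes "0 \<le> y" "y \<le> 1"
  shows "exp (- (y ^ 2 / 2 + y ^ 4 / 2)) \<le> cos y"
proof -
  define a where "a = y ^ 2 / 2"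
  have a: "0 \<le> a" "a \<le> 1/2" using assms by (auto simp: a_def power_le_one)
  have "y ^ 2 / 2 + y ^ 4 / 2 = a + 2 * a ^ 2"
    by (simp add: a_def field_simps power2_eq_square power4_eq_xxxx)
  then have "exp (- (y ^ 2 / 2 + y ^ 4 / 2)) \<le> exp (ln (1 - a))"
    using ln_one_minus_pos_lower_bound[OF a] by simp
  also have "\<dots> = 1 - a" using a by simp
  also have "\<dots> \<le> cos y" using cos_ge_one_minus_half_square[of y] by (simp add: a_def)
  finally show ?thesis .
qed

lemma odd_cos_prod_ge_exp:
  fixes x :: real
  assumes x: "0 \<le> x" "2 * real n * x \<le> 1"
  shows "exp (- (2/3 * real n ^ 3 * x ^ 2 + 8/5 * real n ^ 5 * x ^ 4)) \<le> odd_cos_prod n x"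
proof -
  let ?y = "\<lambda>i. (2 * real i + 1) * x"
  define A where "A = x ^ 2 / 2 * (\<Sum>i<n. (2 * real i + 1) ^ 2)"
  define B where "B = x ^ 4 / 2 * (\<Sum>i<n. (2 * real i + 1) ^ 4)"
  have "A \<le> 2/3 * real n ^ 3 * x ^ 2"
    unfolding A_def sum_odd_squares using x by (simp add: field_simps power2_eq_square power3_eq_cube)
  moreover have "B \<le> 8/5 * real n ^ 5 * x ^ 4"
    using mult_left_mono[OF sum_odd_fourth_powers_le, of "x ^ 4 / 2" n] unfolding B_def
    by (simp add: mult.commute)
  ultimately have "exp (- (2/3 * real n ^ 3 * x ^ 2 + 8/5 * real n ^ 5 * x ^ 4)) \<le> exp (- (A + B))"
    by simp
  also have "\<dots> = (\<Prod>i<n. exp (- (?y i ^ 2 / 2 + ?y i ^ 4 / 2)))"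
  proof -
    have "(\<Sum>i<n. - (?y i ^ 2 / 2 + ?y i ^ 4 / 2)) = - (A + B)"
      unfolding A_def B_def sum_distrib_left sum.distrib[symmetric] sum_negf[symmetric]
      by (intro sum.cong) (simp_all add: power_mult_distrib mult.commute)
    then show ?thesis by (simp add: exp_sum[symmetric])
  qed
  also have "\<dots> \<le> odd_cos_prod n x"
    unfolding odd_cos_prod_def
  proof (intro prod_mono conjI cos_ge_exp_neg)
    fix i assume "i \<in> {..<n}"
    then have "?y i \<le> 2 * real n * x" using x by (intro mult_right_mono) auto
    then show "?y i \<le> 1" using x by linarith
  qed (use x in simp_all)
  finally show ?thesis .
qed

lemma odd_cos_prod_ge_poly:
  fixes x :: real
  assumes x: "0 \<le> x" "2 * real n * x \<le> 1"
    and small: "real n ^ 3 * x ^ 2 \<le> 6" "8/5 * real n ^ 5 * x ^ 4 \<le> 1"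
  shows "(1 - real n ^ 3 * x ^ 2 / 6) ^ 4 * (1 - 8/5 * real n ^ 5 * x ^ 4) \<le> odd_cos_prod n x"
proof -
  have "(1 - real n ^ 3 * x ^ 2 / 6) ^ 4 * (1 - 8/5 * real n ^ 5 * x ^ 4)
      \<le> exp (- (2/3 * real n ^ 3 * x ^ 2)) * exp (- (8/5 * real n ^ 5 * x ^ 4))"
  proof (rule mult_mono)
    show "(1 - real n ^ 3 * x ^ 2 / 6) ^ 4 \<le> exp (- (2/3 * real n ^ 3 * x ^ 2))"
      using exp_ge_one_minus_x_over_n_power_n[of "2/3 * real n ^ 3 * x ^ 2" 4] small
      by (simp add: mult.commute)
    show "1 - 8/5 * real n ^ 5 * x ^ 4 \<le> exp (- (8/5 * real n ^ 5 * x ^ 4))"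
      using exp_ge_add_one_self[of "- (8/5 * real n ^ 5 * x ^ 4)"] by simp
  qed (use small in simp_all)
  also have "\<dots> \<le> odd_cos_prod n x"
    using odd_cos_prod_ge_exp[OF x] by (simp add: exp_add[symmetric])
  finally show ?thesis .
qed

lemma odd_cos_prod_nonneg:
  fixes x :: real
  assumes "0 \<le> x" "2 * real n * x \<le> pi/2"
  shows "0 \<le> odd_cos_prod n x"
  unfolding odd_cos_prod_def
proof (intro prod_nonneg cos_ge_zero)
  fix i assume "i \<in> {..<n}"
  then have "(2 * real i + 1) * x \<le> 2 * real n * x" using assms by (intro mult_right_mono) auto
  then show "(2 * real i + 1) * x \<le> pi/2" using assms by linarith
  have "0 \<le> (2 * real i + 1) * x" using assms by simp
  then show "- (pi/2) \<le> (2 * real i + 1) * x" using pi_gt_zero by linarith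
qed

lemma gap_kernel_ge_sin_sq:
  fixes x M :: real
  assumes M: "0 \<le> M" "M \<le> 2 * real n - 1" and x: "0 \<le> x" "2 * real n * x \<le> pi/2"
  shows "2 * (sin x) ^ 2 * odd_cos_prod n x \<le> gap_kernel n M x"
proof -
  have diff: "cos (M * x) - cos ((M + 2) * x) = 2 * sin ((M + 1) * x) * sin x"
    using cos_diff_cos[of "M * x" "(M + 2) * x"] by (simp add: algebra_simps add_divide_distrib)
  have "(M + 1) * x \<le> 2 * real n * x" using M x by (intro mult_right_mono) auto
  then have Mx: "(M + 1) * x \<le> pi/2" using x by linarith
  have x_le: "x \<le> (M + 1) * x" using M x by (simp add: algebra_simps)
  have "sin x \<le> sin ((M + 1) * x)" using Mx x x_le by (intro sin_monotone_2pi_le) auto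
  moreover have "0 \<le> sin x" using x Mx x_le by (intro sin_ge_zero) auto
  ultimately have "2 * sin x * odd_cos_prod n x * sin x \<le> 2 * sin x * odd_cos_prod n x * sin ((M + 1) * x)"
    using odd_cos_prod_nonneg[OF x] by (intro mult_left_mono) auto
  then show ?thesis unfolding gap_kernel_def diff by (simp add: power2_eq_square algebra_simps)
qed

lemma sin_square_ge: 
  fixes x :: real assumes "0 \<le> x" "x \<le> 1"
  shows "x ^ 2 * (1 - x ^ 2 / 3) \<le> (sin x) ^ 2"
proof -
  have "(x - x ^ 3 / 6) ^ 2 = x ^ 2 * (1 - x ^ 2 / 3) + (x ^ 3 / 6) ^ 2"
    by (simp add: power2_eq_square power3_eq_cube field_simps)
  then have "x ^ 2 * (1 - x ^ 2 / 3) \<le> (x - x ^ 3 / 6) ^ 2" by simp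
  also have "\<dots> \<le> (sin x) ^ 2"
    using assms sin_ge_minus_cube[OF assms(1)] power_decreasing[of 1 3 x] by (intro power_mono) auto
  finally show ?thesis .
qed

lemma near_origin_bounds:
  fixes x :: real
  assumes n: "86 \<le> n" and x: "0 \<le> x" "x ^ 2 * real n ^ 3 \<le> 4"
  shows "2 * real n * x \<le> 4/9" and "8/5 * real n ^ 5 * x ^ 4 \<le> 1"
proof -
  have nr: "86 \<le> real n" using n by simp
  have "(2 * real n * x) ^ 2 * real n = 4 * (x ^ 2 * real n ^ 3)"
    by (simp add: power2_eq_square power3_eq_cube)
  moreover have "(2 * real n * x) ^ 2 * 86 \<le> (2 * real n * x) ^ 2 * real n"
    using nr by (intro mult_left_mono) auto
  ultimately have "(2 * real n * x) ^ 2 \<le> 16/81" using x by linarith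
  then have "(2 * real n * x) ^ 2 \<le> (4/9) ^ 2" by (simp add: power_divide)
  then show "2 * real n * x \<le> 4/9" by (rule power2_le_imp_le) simp
  have "(x ^ 2 * real n ^ 3) ^ 2 \<le> 4 ^ 2" using x by (intro power_mono) auto
  then have "(x ^ 2 * real n ^ 3) ^ 2 \<le> 16" by simp
  moreover have "(x ^ 2 * real n ^ 3) ^ 2 = real n * (real n ^ 5 * x ^ 4)"
    by (simp add: power2_eq_square power3_eq_cube eval_nat_numeral)
  moreover have "86 * (real n ^ 5 * x ^ 4) \<le> real n * (real n ^ 5 * x ^ 4)"
    using nr by (intro mult_right_mono) auto
  ultimately have "8/5 * (real n ^ 5 * x ^ 4) \<le> 1" by linarith
  then show "8/5 * real n ^ 5 * x ^ 4 \<le> 1" by (metis mult.assoc)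
qed

lemma gap_kernel_ge_poly:
  fixes x M :: real
  assumes n: "86 \<le> n" and M: "0 \<le> M" "M \<le> 2 * real n - 1"
    and x: "0 \<le> x" "x ^ 2 * real n ^ 3 \<le> 4"
  shows "2 * x ^ 2 * (1 - real n ^ 3 * x ^ 2 / 6) ^ 4 * (1 - x ^ 2 / 3 - 8/5 * real n ^ 5 * x ^ 4)
          \<le> gap_kernel n M x"
proof -
  note nx = near_origin_bounds(1)[OF n x] and V = near_origin_bounds(2)[OF n x]
  define L where "L = (1 - real n ^ 3 * x ^ 2 / 6) ^ 4 * (1 - 8/5 * real n ^ 5 * x ^ 4)"
  have L0: "0 \<le> L" using V by (simp add: L_def)
  have LF: "L \<le> odd_cos_prod n x"
    unfolding L_def using nx x V by (intro odd_cos_prod_ge_poly) (auto simp: mult.commute)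
  have "86 * x \<le> 2 * real n * x" using n x by (intro mult_right_mono) auto
  then have "x \<le> 1" using nx by linarith
  with x have sin_sq: "x ^ 2 * (1 - x ^ 2 / 3) \<le> (sin x) ^ 2" by (intro sin_square_ge)
  have "2 * x ^ 2 * (1 - real n ^ 3 * x ^ 2 / 6) ^ 4 * (1 - x ^ 2 / 3 - 8/5 * real n ^ 5 * x ^ 4)
      \<le> 2 * x ^ 2 * (1 - real n ^ 3 * x ^ 2 / 6) ^ 4 * ((1 - x ^ 2 / 3) * (1 - 8/5 * real n ^ 5 * x ^ 4))"
    by (intro mult_left_mono) (simp_all add: algebra_simps)
  also have "\<dots> = 2 * (x ^ 2 * (1 - x ^ 2 / 3)) * L" by (simp add: L_def algebra_simps)
  also have "\<dots> \<le> 2 * (sin x) ^ 2 * odd_cos_prod n x"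
    using sin_sq LF L0 by (intro mult_mono mult_left_mono) auto
  also have "\<dots> \<le> gap_kernel n M x"
    using nx pi_gt3 by (intro gap_kernel_ge_sin_sq M x(1)) linarith
  finally show ?thesis .
qed

(* Substituting x = w t with w = 2 / n^(3/2) turns the lower bound of gap_kernel_ge_poly into
   w^2 * peak_poly e1 e2 t with e1 = 4 / (3 n^3) and e2 = 128 / (5 n). *)
definition peak_poly :: "real \<Rightarrow> real \<Rightarrow> real \<Rightarrow> real" where
  "peak_poly e1 e2 t = 2 * t ^ 2 * (1 - 2/3 * t ^ 2) ^ 4 * (1 - e1 * t ^ 2 - e2 * t ^ 4)"

definition peak_poly_primitive :: "real \<Rightarrow> real \<Rightarrow> real \<Rightarrow> real" where
  "peak_poly_primitive e1 e2 t =
       ((2/3) * t^3 - (16/15) * t^5 + (16/21) * t^7 - (64/243) * t^9 + (32/891) * t^11)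
     - e1 * ((2/5) * t^5 - (16/21) * t^7 + (16/27) * t^9 - (64/297) * t^11 + (32/1053) * t^13)
     - e2 * ((2/7) * t^7 - (16/27) * t^9 + (16/33) * t^11 - (64/351) * t^13 + (32/1215) * t^15)"

lemma peak_poly_primitive_deriv:
  "(peak_poly_primitive e1 e2 has_real_derivative peak_poly e1 e2 t) (at t)"
proof -
  have "(peak_poly_primitive e1 e2 has_real_derivative
       ((2/3) * (3 * t^2) - (16/15) * (5 * t^4) + (16/21) * (7 * t^6) - (64/243) * (9 * t^8) + (32/891) * (11 * t^10))
     - e1 * ((2/5) * (5 * t^4) - (16/21) * (7 * t^6) + (16/27) * (9 * t^8) - (64/297) * (11 * t^10) + (32/1053) * (13 * t^12))
     - e2 * ((2/7) * (7 * t^6) - (16/27) * (9 * t^8) + (16/33) * (11 * t^10) - (64/351) * (13 * t^12) + (32/1215) * (15 * t^14))) (at t)"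
    unfolding peak_poly_primitive_def[abs_def] by (auto intro!: derivative_eq_intros)
  moreover have "((2/3) * (3 * t^2) - (16/15) * (5 * t^4) + (16/21) * (7 * t^6) - (64/243) * (9 * t^8) + (32/891) * (11 * t^10))
     - e1 * ((2/5) * (5 * t^4) - (16/21) * (7 * t^6) + (16/27) * (9 * t^8) - (64/297) * (11 * t^10) + (32/1053) * (13 * t^12))
     - e2 * ((2/7) * (7 * t^6) - (16/27) * (9 * t^8) + (16/33) * (11 * t^10) - (64/351) * (13 * t^12) + (32/1215) * (15 * t^14))
     = peak_poly e1 e2 t"
    unfolding peak_poly_def by algebra
  ultimately show ?thesis by simp
qed

lemma has_integral_peak_poly_scaled:
  fixes w :: real assumes w: "0 < w"
  shows "((\<lambda>x. w ^ 2 * peak_poly e1 e2 (x / w)) has_integral w ^ 3 * peak_poly_primitive e1 e2 1) {0..w}"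
proof -
  have "((\<lambda>x. w ^ 3 * peak_poly_primitive e1 e2 (x / w)) has_real_derivative w ^ 2 * peak_poly e1 e2 (x / w)) (at x)" for x
  proof -
    have "((\<lambda>x. w ^ 3 * peak_poly_primitive e1 e2 (x / w)) has_real_derivative w ^ 3 * (peak_poly e1 e2 (x / w) * (1 / w))) (at x)"
      using w by (intro DERIV_cmult DERIV_chain2[OF peak_poly_primitive_deriv]) (auto intro!: derivative_eq_intros)
    moreover have "w ^ 3 * (peak_poly e1 e2 (x / w) * (1 / w)) = w ^ 2 * peak_poly e1 e2 (x / w)"
      using w by (simp add: power2_eq_square power3_eq_cube)
    ultimately show ?thesis by simp
  qed
  then have "((\<lambda>x. w ^ 2 * peak_poly e1 e2 (x / w)) has_integral
        w ^ 3 * peak_poly_primitive e1 e2 (w / w) - w ^ 3 * peak_poly_primitive e1 e2 (0 / w)) {0..w}"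
    using w by (intro fundamental_theorem_of_calculus)
      (auto simp: has_real_derivative_iff_has_vector_derivative[symmetric] intro: has_field_derivative_at_within)
  then show ?thesis using w by (simp add: peak_poly_primitive_def)
qed

lemma peak_poly_scaled_eq:
  fixes w x :: real
  assumes w: "0 < w" "w ^ 2 * real n ^ 3 = 4" and n: "1 \<le> n"
  shows "w ^ 2 * peak_poly (4 / (3 * real n ^ 3)) (128 / (5 * real n)) (x / w) =
          2 * x ^ 2 * (1 - real n ^ 3 * x ^ 2 / 6) ^ 4 * (1 - x ^ 2 / 3 - 8/5 * real n ^ 5 * x ^ 4)"
proof -
  define t where "t = x / w"
  have x: "x = w * t" using w by (simp add: t_def)
  have np: "0 < real n" using n by simp
  have w2: "w ^ 2 = 4 / real n ^ 3" using w np by (simp add: field_simps)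
  have "real n ^ 3 * x ^ 2 / 6 = 2/3 * t ^ 2"
    using w by (simp add: x power_mult_distrib field_simps)
  moreover have "x ^ 2 / 3 = 4 / (3 * real n ^ 3) * t ^ 2"
    by (simp add: x w2 power_mult_distrib)
  moreover have "8/5 * real n ^ 5 * x ^ 4 = 128 / (5 * real n) * t ^ 4"
  proof -
    have "real n * (w ^ 4 * real n ^ 5) = (w ^ 2 * real n ^ 3) ^ 2" by algebra
    then have w4: "w ^ 4 * real n ^ 5 = 16 / real n"
      using w np by (simp add: field_simps)
    have "8/5 * real n ^ 5 * x ^ 4 = 8/5 * (w ^ 4 * real n ^ 5) * t ^ 4"
      by (simp add: x power_mult_distrib)
    then show ?thesis unfolding w4 by simp
  qed
  moreover have "2 * x ^ 2 = w ^ 2 * (2 * t ^ 2)" by (simp add: x power_mult_distrib)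
  ultimately show ?thesis
    unfolding peak_poly_def t_def[symmetric] by (simp add: algebra_simps)
qed

lemma integral_gap_kernel_ge_near_zero:
  fixes M :: real
  assumes n: "86 \<le> n" and M: "0 \<le> M" "M \<le> 2 * real n - 1"
  defines "w \<equiv> 2 / (real n * sqrt (real n))"
  shows "w ^ 3 * peak_poly_primitive (4 / (3 * real n ^ 3)) (128 / (5 * real n)) 1
           \<le> integral {0..w} (gap_kernel n M)"
proof -
  have nr: "86 \<le> real n" using n by simp
  have n1: "1 \<le> n" using n by simp
  have w0: "0 < w" unfolding w_def using nr by simp
  have wn: "w ^ 2 * real n ^ 3 = 4"
    unfolding w_def using nr by (simp add: power_divide power_mult_distrib power2_eq_square power3_eq_cube)
  let ?p = "\<lambda>x. w ^ 2 * peak_poly (4 / (3 * real n ^ 3)) (128 / (5 * real n)) (x / w)"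
  have "integral {0..w} ?p \<le> integral {0..w} (gap_kernel n M)"
  proof (rule integral_le)
    show "?p integrable_on {0..w}" using has_integral_peak_poly_scaled[OF w0] by blast
    show "gap_kernel n M integrable_on {0..w}"
      by (rule integrable_continuous_interval[OF continuous_on_gap_kernel])
    fix x assume x: "x \<in> {0..w}"
    then have "x ^ 2 * real n ^ 3 \<le> w ^ 2 * real n ^ 3"
      by (intro mult_right_mono power_mono) auto
    with x show "?p x \<le> gap_kernel n M x"
      unfolding peak_poly_scaled_eq[OF w0 wn n1] using n1
      by (intro gap_kernel_ge_poly[OF n M]) (auto simp: wn)
  qed
  then show ?thesis using integral_unique[OF has_integral_peak_poly_scaled[OF w0]] by simp
qed

section \<open>Lower bound for the integral\<close>

lemma abs_gap_kernel_le: "\<bar>gap_kernel n M x\<bar> \<le> 2 * \<bar>odd_cos_prod n x\<bar>"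
proof -
  have "\<bar>cos (M * x) - cos ((M + 2) * x)\<bar> \<le> 2"
    using abs_cos_le_one[of "M * x"] abs_cos_le_one[of "(M + 2) * x"] by linarith
  then show ?thesis unfolding gap_kernel_def abs_mult by (intro mult_right_mono) auto
qed

lemma integral_gap_kernel_ge_mid:
  fixes M :: real
  assumes n: "86 \<le> n"
  shows "- (pi * exp (- (0.2587 * real n)))
           \<le> integral {pi / (4 * real n)..pi/2 - 7 / (4 * real n)} (gap_kernel n M)"
proof -
  define q where "q = pi / (4 * real n)"
  define r where "r = pi/2 - 7 / (4 * real n)"
  have nr: "86 \<le> real n" using n by simp
  have "pi * 172 \<le> pi * (real n * 2)" using nr by (intro mult_left_mono) auto
  then have "pi + 7 \<le> pi * (real n * 2)" using pi_gt3 by linarith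
  then have qr: "q \<le> r" unfolding q_def r_def using nr by (simp add: field_simps)
  have "\<bar>integral {q..r} (gap_kernel n M)\<bar> \<le> 2 * exp (- (0.2587 * real n)) * (r - q)"
  proof (rule integral_bound[OF qr continuous_on_gap_kernel, unfolded real_norm_def])
    fix x assume "x \<in> {q..r}"
    then show "\<bar>gap_kernel n M x\<bar> \<le> 2 * exp (- (0.2587 * real n))"
      using abs_gap_kernel_le[of n M x] abs_odd_cos_prod_le_mid[OF n, of x] by (auto simp: q_def r_def)
  qed
  moreover have "2 * exp (- (0.2587 * real n)) * (r - q) \<le> pi * exp (- (0.2587 * real n))"
  proof -
    have "2 * (r - q) \<le> pi" unfolding q_def r_def using nr pi_gt_zero by (simp add: field_simps)
    from mult_right_mono[OF this exp_ge_zero[of "- (0.2587 * real n)"]] show ?thesis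
      by (simp only: mult_ac)
  qed
  ultimately show ?thesis unfolding abs_le_iff q_def r_def by linarith
qed

lemma integral_gap_kernel_ge_end:
  fixes M :: real
  assumes n: "86 \<le> n"
  shows "- (7 / (2 * real n) * exp (- (0.2449 * real n)))
           \<le> integral {pi/2 - 7 / (4 * real n)..pi/2} (gap_kernel n M)"
proof -
  define r where "r = pi/2 - 7 / (4 * real n)"
  have "r \<le> pi/2" unfolding r_def by simp
  then have "\<bar>integral {r..pi/2} (gap_kernel n M)\<bar> \<le> 2 * exp (- (0.2449 * real n)) * (pi/2 - r)"
  proof (rule integral_bound[OF _ continuous_on_gap_kernel, unfolded real_norm_def])
    fix x assume "x \<in> {r..pi/2}"
    then show "\<bar>gap_kernel n M x\<bar> \<le> 2 * exp (- (0.2449 * real n))"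
      using abs_gap_kernel_le[of n M x] abs_odd_cos_prod_le_end[OF n, of x] by (auto simp: r_def)
  qed
  moreover have "pi/2 - r = 7 / (4 * real n)" by (simp add: r_def)
  ultimately show ?thesis unfolding abs_le_iff r_def by (simp add: field_simps)
qed

lemma integral_gap_kernel_ge:
  fixes M :: real
  assumes n: "86 \<le> n" and M: "0 \<le> M" "M \<le> 2 * real n - 1"
  shows "(2 / (real n * sqrt (real n))) ^ 3 * peak_poly_primitive (4 / (3 * real n ^ 3)) (128 / (5 * real n)) 1
          - pi * exp (- (0.2587 * real n)) - 7 / (2 * real n) * exp (- (0.2449 * real n))
         \<le> integral {0..pi/2} (gap_kernel n M)"
proof -
  define w where "w = 2 / (real n * sqrt (real n))"
  define q where "q = pi / (4 * real n)"
  define r where "r = pi/2 - 7 / (4 * real n)"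
  have nr: "86 \<le> real n" using n by simp
  have int: "gap_kernel n M integrable_on {a..b}" for a b
    by (rule integrable_continuous_interval[OF continuous_on_gap_kernel])
  have "9 \<le> sqrt (real n)" using nr by (simp add: real_le_rsqrt)
  then have "real n * 9 \<le> real n * sqrt (real n)" by (intro mult_left_mono) auto
  then have "w \<le> 2 / (real n * 9)" unfolding w_def using nr by (intro divide_left_mono) auto
  then have wq: "w \<le> q" unfolding q_def using nr pi_gt3 by (simp add: field_simps)
  have w0: "0 \<le> w" unfolding w_def by simp
  have "pi * 172 \<le> pi * (real n * 2)" using nr by (intro mult_left_mono) auto
  then have "pi + 7 \<le> pi * (real n * 2)" using pi_gt3 by linarith
  then have qr: "q \<le> r" unfolding q_def r_def using nr by (simp add: field_simps)
  have "0 \<le> integral {w..q} (gap_kernel n M)"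
  proof (rule integral_nonneg[OF int])
    fix x assume "x \<in> {w..q}"
    then have x: "0 \<le> x" "2 * real n * x \<le> pi/2" using w0 nr by (auto simp: q_def field_simps)
    have "0 \<le> 2 * (sin x) ^ 2 * odd_cos_prod n x" using odd_cos_prod_nonneg[OF x] by simp
    then show "0 \<le> gap_kernel n M x" using gap_kernel_ge_sin_sq[OF M x] by linarith
  qed
  moreover have "integral {0..pi/2} (gap_kernel n M) = integral {0..w} (gap_kernel n M)
      + integral {w..q} (gap_kernel n M) + integral {q..r} (gap_kernel n M) + integral {r..pi/2} (gap_kernel n M)"
    using w0 wq qr by (simp add: Henstock_Kurzweil_Integration.integral_combine int r_def)
  ultimately show ?thesis
    using integral_gap_kernel_ge_near_zero[OF n M] integral_gap_kernel_ge_mid[OF n, of M]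
      integral_gap_kernel_ge_end[OF n, of M]
    unfolding w_def[symmetric] q_def[symmetric] r_def[symmetric] by linarith
qed

section \<open>Numerical constants\<close>

lemma exp_ge_taylor_partial_sum:
  fixes x :: real assumes "0 \<le> x"
  shows "(\<Sum>m<N. x ^ m / fact m) \<le> exp x"
proof -
  obtain t where "exp x = (\<Sum>m<N. x ^ m / fact m) + exp t / fact N * x ^ N"
    using Maclaurin_exp_le by blast
  moreover have "0 \<le> exp t / fact N * x ^ N" using assms by simp
  ultimately show ?thesis by linarith
qed

lemma ln_86_le: "ln (86::real) \<le> 4.46"
proof -
  have "(\<Sum>m<14. (4.46::real) ^ m / fact m) \<le> exp 4.46" by (rule exp_ge_taylor_partial_sum) simp
  moreover have "86 \<le> (\<Sum>m<14. (4.46::real) ^ m / fact m)"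
    by (simp add: lessThan_Suc eval_nat_numeral fact_Suc)
  ultimately have "ln 86 \<le> ln (exp (4.46::real))" by (subst ln_le_cancel_iff) auto
  then show ?thesis by simp
qed

lemma exp_neg_mult_powr_le:
  fixes c :: real
  assumes n: "86 \<le> n" and c: "9/2/86 \<le> c"
  shows "exp (- (c * real n)) * real n powr (9/2) \<le> exp (- (86 * c) + 9/2 * 4.46)"
proof -
  have nr: "86 \<le> real n" using n by simp
  have "ln (real n) = ln 86 + ln (real n / 86)" using nr by (simp add: ln_div)
  also have "\<dots> \<le> 4.46 + (real n / 86 - 1)" using ln_86_le ln_le_minus_one[of "real n / 86"] nr by simp
  finally have ln_n: "ln (real n) \<le> 4.46 + (real n / 86 - 1)" .
  have "(9/2/86 - c) * (real n - 86) \<le> 0" using c nr by (intro mult_nonpos_nonneg) auto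
  then have "9/2/86 * real n - 9/2 - c * real n + 86 * c \<le> 0"
    by (simp add: algebra_simps diff_divide_distrib; linarith)
  then have "- (c * real n) + 9/2 * ln (real n) \<le> - (86 * c) + 9/2 * 4.46"
    using ln_n by linarith
  moreover have "exp (- (c * real n)) * real n powr (9/2) = exp (- (c * real n) + 9/2 * ln (real n))"
    using nr by (simp add: powr_def exp_add[symmetric] algebra_simps)
  ultimately show ?thesis by simp
qed

lemma exp_neg_mid_powr_le: "86 \<le> n \<Longrightarrow> exp (- (0.2587 * real n)) * real n powr (9/2) \<le> 0.1136"
proof -
  assume n: "86 \<le> n"
  have "(\<Sum>m<9. (2.1782::real) ^ m / fact m) \<le> exp 2.1782" by (rule exp_ge_taylor_partial_sum) simp
  moreover have "8.81 \<le> (\<Sum>m<9. (2.1782::real) ^ m / fact m)"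
    by (simp add: lessThan_Suc eval_nat_numeral fact_Suc)
  ultimately have "exp (- 2.1782) \<le> (0.1136::real)" by (simp add: exp_minus field_simps)
  then show ?thesis using exp_neg_mult_powr_le[OF n, of "0.2587"] by simp
qed

lemma exp_neg_end_powr_le: "86 \<le> n \<Longrightarrow> exp (- (0.2449 * real n)) * real n powr (9/2) \<le> 0.372"
proof -
  assume n: "86 \<le> n"
  have "(\<Sum>m<6. (0.9914::real) ^ m / fact m) \<le> exp 0.9914" by (rule exp_ge_taylor_partial_sum) simp
  moreover have "2.69 \<le> (\<Sum>m<6. (0.9914::real) ^ m / fact m)"
    by (simp add: lessThan_Suc eval_nat_numeral fact_Suc)
  ultimately have "exp (- 0.9914) \<le> (0.372::real)" by (simp add: exp_minus field_simps)
  then show ?thesis using exp_neg_mult_powr_le[OF n, of "0.2449"] by simp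
qed

lemma peak_poly_primitive_one_ge:
  assumes n: "86 \<le> n"
  shows "0.1279 \<le> peak_poly_primitive (4 / (3 * real n ^ 3)) (128 / (5 * real n)) 1"
proof -
  have nr: "86 \<le> real n" using n by simp
  have "86 ^ 3 \<le> real n ^ 3" using nr by (intro power_mono) auto
  then have "4 / (3 * real n ^ 3) \<le> 4 / (3 * 86 ^ 3)" using nr by (intro divide_left_mono) auto
  moreover have "128 / (5 * real n) \<le> 128 / (5 * 86)" using nr by (intro divide_left_mono) auto
  ultimately show ?thesis by (simp add: peak_poly_primitive_def)
qed

lemma powr_nine_halves: "0 \<le> x \<Longrightarrow> x powr (9/2) = x ^ 4 * sqrt x"
  by (cases "x = 0") (simp_all add: powr_add[of x 4 "1/2", simplified] powr_half_sqrt powr_realpow)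

lemma integral_gap_kernel_ge_powr:
  fixes M :: real
  assumes n: "86 \<le> n" and M: "0 \<le> M" "M \<le> 2 * real n - 1"
  shows "0.52 / real n powr (9/2) \<le> integral {0..pi/2} (gap_kernel n M)"
proof -
  define P where "P = real n powr (9/2)"
  define A where "A = peak_poly_primitive (4 / (3 * real n ^ 3)) (128 / (5 * real n)) 1"
  define E1 where "E1 = exp (- (0.2587 * real n))"
  define E2 where "E2 = exp (- (0.2449 * real n))"
  have nr: "86 \<le> real n" using n by simp
  have P0: "0 < P" unfolding P_def using nr by simp
  have wP: "(2 / (real n * sqrt (real n))) ^ 3 * P = 8"
  proof -
    have "sqrt (real n) ^ 3 = real n * sqrt (real n)" by (simp add: power3_eq_cube)
    then show ?thesis using nr by (simp add: P_def powr_nine_halves power_divide power_mult_distrib field_simps eval_nat_numeral)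
  qed
  have "7 / (2 * real n) * (E2 * P) \<le> 7 / 172 * 0.372"
    using nr exp_neg_end_powr_le[OF n] by (intro mult_mono divide_left_mono) (auto simp: E2_def P_def)
  moreover have "pi * (E1 * P) \<le> 3.1416 * 0.1136"
    using pi_bounds exp_neg_mid_powr_le[OF n] by (intro mult_mono) (auto simp: E1_def P_def)
  moreover have "0.1279 \<le> A" unfolding A_def by (rule peak_poly_primitive_one_ge[OF n])
  ultimately have "0.52 \<le> ((2 / (real n * sqrt (real n))) ^ 3 * A - pi * E1 - 7 / (2 * real n) * E2) * P"
    using wP by (simp add: algebra_simps)
  also have "\<dots> \<le> integral {0..pi/2} (gap_kernel n M) * P"
    using integral_gap_kernel_ge[OF n M] P0 unfolding A_def E1_def E2_def by (intro mult_right_mono) auto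
  finally show ?thesis using P0 by (simp add: P_def divide_le_eq)
qed

lemma lemma5p2_constant_times_pi_le: "3 * sqrt 3 / (2 * sqrt 2 * pi powr (3/2)) * pi \<le> (104/100::real)"
proof -
  have s3: "sqrt 3 \<le> (17321/10000::real)" by (rule real_le_lsqrt) (simp_all add: power2_eq_square)
  have s2: "(14142/10000::real) \<le> sqrt 2" by (rule real_le_rsqrt) (simp add: power2_eq_square)
  have "(1772/1000::real)\<^sup>2 \<le> pi" using pi_bounds by (simp add: power2_eq_square)
  then have sp: "(1772/1000::real) \<le> sqrt pi" by (rule real_le_rsqrt)
  have "pi powr (3/2) = pi * sqrt pi"
    by (simp add: powr_add[of pi 1 "1/2", simplified] powr_half_sqrt)
  then have "3 * sqrt 3 / (2 * sqrt 2 * pi powr (3/2)) * pi = 3 * sqrt 3 / (2 * sqrt 2 * sqrt pi)"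
    by simp
  also have "\<dots> \<le> 104/100"
  proof -
    have "2 * (14142/10000) * (1772/1000) \<le> 2 * sqrt 2 * sqrt (pi::real)" using s2 sp by (intro mult_mono) auto
    then have "3 * sqrt 3 \<le> 104/100 * (2 * sqrt 2 * sqrt pi)" using s3 by linarith
    then show ?thesis by (simp add: divide_le_eq)
  qed
  finally show ?thesis .
qed

theorem lemma5p2:
  fixes n :: nat and k :: int
  assumes "n \<ge> 86"
    and "(real n - 1) ^ 2 / 2 \<le> real_of_int k"
    and "real_of_int k \<le> real n ^ 2 / 2"
  shows "real (b k n) - real (b (k - 1) n)
         \<ge> (3 * sqrt 3 / (2 * sqrt 2 * pi powr (3/2))) * 2 ^ n / real n powr (9/2)"
proof -
  define C where "C = 3 * sqrt 3 / (2 * sqrt 2 * pi powr (3/2))"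
  define M where "M = real n ^ 2 - 2 * real_of_int k"
  define P where "P = real n powr (9/2)"
  have M: "0 \<le> M" "M \<le> 2 * real n - 1"
    using assms(2,3) by (auto simp: M_def power2_eq_square algebra_simps)
  have P0: "0 < P" unfolding P_def using assms(1) by simp
  have "C * 2 ^ n / P = (C * pi) * 2 ^ n / (pi * P)" by simp
  also have "\<dots> \<le> 2 ^ Suc n * (0.52 / P) / pi"
    using lemma5p2_constant_times_pi_le P0 unfolding C_def by (simp add: field_simps)
  also have "\<dots> \<le> 2 ^ Suc n * integral {0..pi/2} (gap_kernel n M) / pi"
    using integral_gap_kernel_ge_powr[OF assms(1) M] unfolding P_def
    by (intro divide_right_mono mult_left_mono) auto
  also have "\<dots> = real (b k n) - real (b (k - 1) n)"
    using b_diff_eq_integral[of k n] unfolding M_def by (simp add: field_simps)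
  finally show ?thesis by (simp add: C_def P_def)
qed

end
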